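(* There is a universal constant $C>0$ such that the following holds. Fix $\delta\in(0,1)$ and step size $\alpha>0$, and let $B_{N,d,\delta} := 1 + C\Big(\sqrt{\frac{d\log(2d/\delta)}{N}} + \frac{d\log(2d/\delta)}{N}\Big)$. If \[ a_\star \le \min\Big\{1, \frac{1}{2\alpha B_{N,d,\delta}}\Big\}, \] then with probability at least $1-\delta$ the stability event \[ \alpha|a_t|\,\|\widehat M\|_2 \le \tfrac12 \quad\text{for all } t < T_\star := \min\{t : |a_t|\ge a_\star\} \] holds.
   Context: Samples $(x^{(s)},y^{(s)})_{s=1}^N$ are i.i.d. with $x^{(s)}$ uniform on $\{\pm1\}^d$, $y^{(s)} = x^{(s)}_1x^{(s)}_2$; $\widehat M := \frac1N\sum_{s} y^{(s)}x^{(s)}x^{(s)\top}$. Phase-1 updates: $a_{t+1} = \mathrm{clip}_{[-1,1]}(a_t + \frac\alpha2 w_t^\top\widehat M w_t)$, $w_{t+1} = \frac{w_t+\alpha a_t\widehat M w_t}{\|w_t+\alpha a_t\widehat M w_t\|_2}$, from a unit vector $w_0$ and scalar $a_0$. $\|\cdot\|_2$ is the operator norm. *)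

theory Defs
  imports "HOL-Probability.Probability"
begin

text \<open>Vectors in R^d are functions nat => real (only indices < d matter);
  d x d matrices are functions nat => nat => real. Coordinates x_1, x_2 of the
  paper are indices 0, 1 here. A sample set is X :: nat => nat => real, with
  X s = x^(s+1) for s < N.\<close>

definition vnorm :: "nat \<Rightarrow> (nat \<Rightarrow> real) \<Rightarrow> real" where
  "vnorm d v = sqrt (\<Sum>i<d. (v i)\<^sup>2)"

definition matvec :: "nat \<Rightarrow> (nat \<Rightarrow> nat \<Rightarrow> real) \<Rightarrow> (nat \<Rightarrow> real) \<Rightarrow> nat \<Rightarrow> real" where
  "matvec d M v i = (\<Sum>j<d. M i j * v j)"

definition quadform :: "nat \<Rightarrow> (nat \<Rightarrow> nat \<Rightarrow> real) \<Rightarrow> (nat \<Rightarrow> real) \<Rightarrow> real" where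
  "quadform d M v = (\<Sum>i<d. v i * matvec d M v i)"

definition opnorm :: "nat \<Rightarrow> (nat \<Rightarrow> nat \<Rightarrow> real) \<Rightarrow> real" where
  "opnorm d M = Sup {vnorm d (matvec d M v) | v. vnorm d v \<le> 1}"

definition clip :: "real \<Rightarrow> real" where
  "clip x = max (-1) (min 1 x)"

definition samples :: "nat \<Rightarrow> nat \<Rightarrow> (nat \<Rightarrow> nat \<Rightarrow> real) set" where
  "samples N d = {X. (\<forall>s<N. \<forall>i<d. X s i \<in> {-1, 1}) \<and>
                      (\<forall>s i. (N \<le> s \<or> d \<le> i) \<longrightarrow> X s i = 0)}"

text \<open>Label y = x_1 x_2 and empirical matrix Mhat = (1/N) sum_s y x x^T.\<close>
definition Mhat :: "nat \<Rightarrow> (nat \<Rightarrow> nat \<Rightarrow> real) \<Rightarrow> nat \<Rightarrow> nat \<Rightarrow> real" where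
  "Mhat N X i j = (1 / real N) * (\<Sum>s<N. (X s 0 * X s 1) * X s i * X s j)"

fun traj :: "nat \<Rightarrow> real \<Rightarrow> (nat \<Rightarrow> nat \<Rightarrow> real) \<Rightarrow> real \<Rightarrow> (nat \<Rightarrow> real) \<Rightarrow> nat
             \<Rightarrow> real \<times> (nat \<Rightarrow> real)" where
  "traj d \<alpha> M a0 w0 0 = (a0, w0)"
| "traj d \<alpha> M a0 w0 (Suc t) =
     (let (a, w) = traj d \<alpha> M a0 w0 t;
          u = (\<lambda>i. w i + \<alpha> * a * matvec d M w i)
      in (clip (a + \<alpha> / 2 * quadform d M w), (\<lambda>i. u i / vnorm d u)))"

definition Bnd :: "real \<Rightarrow> nat \<Rightarrow> nat \<Rightarrow> real \<Rightarrow> real" where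
  "Bnd C N d \<delta> = 1 + C * (sqrt (real d * ln (2 * real d / \<delta>) / real N)
                           + real d * ln (2 * real d / \<delta>) / real N)"

text \<open>Stability event: alpha |a_t| ||Mhat|| <= 1/2 for all t < T_star, where
  T_star = min {t. |a_t| >= a_star} (infinite if the set is empty).\<close>
definition stable_event :: "nat \<Rightarrow> nat \<Rightarrow> real \<Rightarrow> real \<Rightarrow> (nat \<Rightarrow> real) \<Rightarrow> real
                            \<Rightarrow> (nat \<Rightarrow> nat \<Rightarrow> real) \<Rightarrow> bool" where
  "stable_event N d \<alpha> a0 w0 astar X \<longleftrightarrow>
     (\<forall>t. (\<forall>s\<le>t. \<bar>fst (traj d \<alpha> (Mhat N X) a0 w0 s)\<bar> < astar) \<longrightarrow>
          \<alpha> * \<bar>fst (traj d \<alpha> (Mhat N X) a0 w0 t)\<bar> * opnorm d (Mhat N X) \<le> 1 / 2)"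

end

theory Submission
  imports Defs
begin

text \<open>If \<open>\<parallel>Mhat\<parallel> \<le> B\<close> then, whatever the trajectory, \<open>\<alpha> |a\<^sub>t| \<parallel>Mhat\<parallel> \<le> \<alpha> a\<^sub>\<star> B \<le> 1/2\<close> for all
  \<open>t < T\<^sub>\<star>\<close>, so it suffices to show \<open>\<parallel>Mhat\<parallel> \<le> B\<close> with probability \<open>1 - \<delta>\<close>.
  The mean \<open>E[y x x\<^sup>T] = e\<^sub>1 e\<^sub>2\<^sup>T + e\<^sub>2 e\<^sub>1\<^sup>T\<close> has norm 1. For a fixed unit vector \<open>w\<close>,
  \<open>w\<^sup>T Mhat w\<close> is the mean of the i.i.d. variables \<open>y (w\<^sup>T x)\<^sup>2\<close>; as \<open>w\<^sup>T x\<close> is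
  sub-Gaussian by Hoeffding's inequality, these are sub-exponential and a Bernstein-type
  Chernoff bound controls their deviation. A union bound over a \<open>1/16\<close>-net of the unit ball,
  of size at most \<open>(2d)\<^bsup>4d\<^esup>\<close>, then bounds \<open>\<parallel>Mhat - E Mhat\<parallel>\<close> by twice the largest deviation on
  the net.\<close>

lemma exp_le_taylor2: "exp (x::real) \<le> 1 + x + x\<^sup>2 / 2 * exp \<bar>x\<bar>"
proof -
  obtain t where "\<bar>t\<bar> \<le> \<bar>x\<bar>" and "exp x = (\<Sum>m<2. x ^ m / fact m) + exp t / fact 2 * x ^ 2"
    using Maclaurin_exp_le[of x 2] by blast
  moreover have "exp t * x\<^sup>2 \<le> exp \<bar>x\<bar> * x\<^sup>2"
    using \<open>\<bar>t\<bar> \<le> \<bar>x\<bar>\<close> by (intro mult_right_mono) auto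
  ultimately show ?thesis
    by (simp add: eval_nat_numeral mult_ac)
qed

lemma sq_le_exp: "0 \<le> (a::real) \<Longrightarrow> a\<^sup>2 \<le> 256 * exp (a / 8)"
proof -
  assume "0 \<le> a"
  then have "(a / 16)\<^sup>2 \<le> (exp (a / 16))\<^sup>2"
    using exp_ge_add_one_self[of "a / 16"] by (intro power_mono) linarith+
  also have "(exp (a / 16))\<^sup>2 = exp (a / 8)"
    by (simp add: power2_eq_square flip: exp_add)
  finally show ?thesis
    by (simp add: power_divide)
qed

lemma sum_exp_neg_quarter_le: "(\<Sum>k<n. exp (- 1 / 4 :: real) ^ k) \<le> 5"
proof -
  have "5 / 4 \<le> exp (1 / 4 :: real)"
    using exp_ge_add_one_self[of "1 / 4 :: real"] by simp
  then have q: "exp (- 1 / 4 :: real) \<le> 4 / 5"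
    by (simp add: exp_minus field_simps)
  have "(\<Sum>k<n. exp (- 1 / 4 :: real) ^ k) = (1 - exp (- 1 / 4) ^ n) / (1 - exp (- 1 / 4))"
    by (simp add: sum_gp_strict)
  also have "\<dots> \<le> 1 / (1 - exp (- 1 / 4))"
    by (intro divide_right_mono) auto
  also have "\<dots> \<le> 5"
    using q by (simp add: field_simps)
  finally show ?thesis .
qed

lemma exp_quarter_le_layer_sum:
  fixes t :: real
  assumes "0 \<le> t" "t \<le> real D"
  shows "exp (t / 4) \<le> (\<Sum>k<Suc D. exp ((real k + 1) / 4) * indicator {y. real k \<le> y} t)"
proof -
  define k where "k = nat \<lfloor>t\<rfloor>"
  have k: "real k \<le> t" "t < real k + 1" "k < Suc D"
    using assms by (auto simp: k_def nat_less_iff floor_less_iff)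
  have "exp (t / 4) \<le> exp ((real k + 1) / 4) * indicator {y. real k \<le> y} t"
    using k by simp
  also have "\<dots> \<le> (\<Sum>k<Suc D. exp ((real k + 1) / 4) * indicator {y. real k \<le> y} t)"
    by (rule member_le_sum) (use k in auto)
  finally show ?thesis .
qed

lemma bernstein_exponent_le:
  fixes K \<tau> :: real
  assumes K: "0 < K" and \<tau>: "0 \<le> \<tau>"
  defines "l \<equiv> min (1 / 8) (\<tau> / (2 * K))"
  shows "K * l\<^sup>2 - l * \<tau> \<le> - min (\<tau>\<^sup>2 / (4 * K)) (\<tau> / 16)"
proof (cases "\<tau> / (2 * K) \<le> 1 / 8")
  case True
  then have "K * l\<^sup>2 - l * \<tau> = - (\<tau>\<^sup>2 / (4 * K))"
    using K by (simp add: l_def field_simps power2_eq_square)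
  then show ?thesis
    by linarith
next
  case False
  then have "K * l\<^sup>2 - l * \<tau> \<le> - (\<tau> / 16)"
    using K by (simp add: l_def field_simps power2_eq_square)
  then show ?thesis
    by linarith
qed

lemma bernstein_rate_ge_of_threshold:
  fixes K \<Lambda> n :: real
  assumes n: "0 < n" and K: "0 < K" and \<Lambda>: "0 \<le> \<Lambda>"
  defines "\<tau> \<equiv> sqrt (4 * K * \<Lambda> / n) + 16 * \<Lambda> / n"
  shows "\<Lambda> \<le> n * min (\<tau>\<^sup>2 / (4 * K)) (\<tau> / 16)"
proof -
  have "(sqrt (4 * K * \<Lambda> / n))\<^sup>2 \<le> \<tau>\<^sup>2"
    using n K \<Lambda> by (intro power_mono) (auto simp: \<tau>_def)
  then have "\<Lambda> \<le> n * (\<tau>\<^sup>2 / (4 * K))"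
    using n K \<Lambda> by (simp add: field_simps)
  moreover have "\<Lambda> \<le> n * (\<tau> / 16)"
    using n K \<Lambda> by (simp add: \<tau>_def field_simps)
  ultimately show ?thesis
    by (simp add: min_def)
qed

section \<open>Sub-exponential tails on finite probability spaces\<close>

lemma expectation_exp_quarter_le_of_tail:
  fixes p :: "'a pmf" and Y :: "'a \<Rightarrow> real"
  assumes fin: "finite (set_pmf p)"
    and nonneg: "\<And>x. x \<in> set_pmf p \<Longrightarrow> 0 \<le> Y x"
    and tail: "\<And>k::nat. measure_pmf.prob p {x. real k \<le> Y x} \<le> 2 * exp (- real k / 2)"
  shows "measure_pmf.expectation p (\<lambda>x. exp (Y x / 4)) \<le> 14"
proof -
  obtain D :: nat where D: "\<And>x. x \<in> set_pmf p \<Longrightarrow> Y x \<le> real D"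
  proof -
    obtain b where "\<And>x. x \<in> set_pmf p \<Longrightarrow> Y x \<le> b"
      using bdd_above_finite[OF finite_imageI[OF fin, of Y]] by (auto simp: bdd_above_def)
    then show ?thesis
      using that real_arch_simple[of b] by (meson order_trans)
  qed
  have layers: "exp (Y x / 4) \<le> (\<Sum>k<Suc D. exp ((real k + 1) / 4) * indicator {x. real k \<le> Y x} x)"
    if "x \<in> set_pmf p" for x
    using exp_quarter_le_layer_sum[OF nonneg[OF that] D[OF that]] by (simp add: indicator_def)
  have integrable: "integrable (measure_pmf p) (f :: _ \<Rightarrow> real)" for f
    by (rule integrable_measure_pmf_finite[OF fin])
  have "measure_pmf.expectation p (\<lambda>x. exp (Y x / 4))
      \<le> measure_pmf.expectation p
           (\<lambda>x. \<Sum>k<Suc D. exp ((real k + 1) / 4) * indicator {x. real k \<le> Y x} x)"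
    by (intro integral_mono_AE integrable AE_pmfI layers)
  also have "\<dots> = (\<Sum>k<Suc D. exp ((real k + 1) / 4) * measure_pmf.prob p {x. real k \<le> Y x})"
    by (subst Bochner_Integration.integral_sum) (auto intro: integrable)
  also have "\<dots> \<le> (\<Sum>k<Suc D. exp ((real k + 1) / 4) * (2 * exp (- real k / 2)))"
    by (intro sum_mono mult_left_mono tail) auto
  also have "\<dots> = 2 * exp (1 / 4) * (\<Sum>k<Suc D. exp (- 1 / 4) ^ k)"
  proof -
    have summand: "exp ((real k + 1) / 4) * (2 * exp (- real k / 2))
        = 2 * exp (1 / 4) * exp (- 1 / 4) ^ k" for k
      by (simp add: field_simps flip: exp_add exp_of_nat_mult)
    show ?thesis
      unfolding sum_distrib_left by (intro sum.cong refl summand)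
  qed
  also have "\<dots> \<le> 2 * (21 / 16) * 5"
    using exp_bound[of "1 / 4 :: real"] sum_exp_neg_quarter_le[of "Suc D"]
    by (intro mult_mono) (auto simp: power2_eq_square sum_nonneg simp del: sum.lessThan_Suc)
  finally show ?thesis
    by simp
qed

lemma mgf_le_of_exp_quarter_moment:
  fixes p :: "'a pmf" and W Y :: "'a \<Rightarrow> real"
  assumes fin: "finite (set_pmf p)"
    and mean: "measure_pmf.expectation p W = 0"
    and bound: "\<And>x. x \<in> set_pmf p \<Longrightarrow> \<bar>W x\<bar> \<le> Y x + 1"
    and moment: "measure_pmf.expectation p (\<lambda>x. exp (Y x / 4)) \<le> 14"
    and l: "\<bar>l\<bar> \<le> 1 / 8"
  shows "measure_pmf.expectation p (\<lambda>x. exp (l * W x)) \<le> exp (2400 * l\<^sup>2)"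
proof -
  define c where "c = 128 * exp (1 / 4 :: real)"
  have pointwise: "exp (l * W x) \<le> 1 + l * W x + c * l\<^sup>2 * exp (Y x / 4)"
    if "x \<in> set_pmf p" for x
  proof -
    define a where "a = \<bar>W x\<bar>"
    have "\<bar>l * W x\<bar> \<le> a / 8"
      using l mult_right_mono[OF l, of a] by (simp add: a_def abs_mult)
    then have "(l * W x)\<^sup>2 / 2 * exp \<bar>l * W x\<bar> \<le> l\<^sup>2 * (a\<^sup>2 / 2 * exp (a / 8))"
      by (simp add: a_def power_mult_distrib mult_left_mono mult.assoc)
    also have "\<dots> \<le> l\<^sup>2 * (128 * exp (a / 4))"
    proof -
      have "a\<^sup>2 * exp (a / 8) \<le> 256 * exp (a / 8) * exp (a / 8)"
        using sq_le_exp[of a] by (intro mult_right_mono) (auto simp: a_def)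
      also have "\<dots> = 256 * exp (a / 4)"
        by (simp add: mult.assoc flip: exp_add)
      finally show ?thesis
        by (intro mult_left_mono) auto
    qed
    also have "\<dots> \<le> c * l\<^sup>2 * exp (Y x / 4)"
      using bound[OF that]
      by (simp add: c_def a_def mult_ac add_divide_distrib mult_left_mono flip: exp_add)
    finally show ?thesis
      using exp_le_taylor2[of "l * W x"] by linarith
  qed
  have integrable: "integrable (measure_pmf p) (f :: _ \<Rightarrow> real)" for f
    by (rule integrable_measure_pmf_finite[OF fin])
  have "measure_pmf.expectation p (\<lambda>x. exp (l * W x))
      \<le> measure_pmf.expectation p (\<lambda>x. 1 + l * W x + c * l\<^sup>2 * exp (Y x / 4))"
    by (intro integral_mono_AE integrable AE_pmfI pointwise)
  also have "\<dots> = 1 + c * l\<^sup>2 * measure_pmf.expectation p (\<lambda>x. exp (Y x / 4))"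
    using mean by (simp add: integrable)
  also have "\<dots> \<le> 1 + c * 14 * l\<^sup>2"
    using mult_left_mono[OF moment, of "c * l\<^sup>2"] by (simp add: c_def mult_ac)
  also have "\<dots> \<le> 1 + 2400 * l\<^sup>2"
    using exp_bound[of "1 / 4 :: real"]
    by (intro add_left_mono mult_right_mono) (auto simp: c_def power2_eq_square)
  also have "\<dots> \<le> exp (2400 * l\<^sup>2)"
    by (rule exp_ge_add_one_self)
  finally show ?thesis .
qed

lemma prob_iid_sum_ge:
  fixes p :: "'a pmf" and f :: "'a \<Rightarrow> real" and K \<tau> :: real
  assumes fin: "finite (set_pmf p)" and K: "0 < K" and \<tau>: "0 \<le> \<tau>"
    and mgf: "\<And>l. 0 \<le> l \<Longrightarrow> l \<le> 1 / 8 \<Longrightarrow> measure_pmf.expectation p (\<lambda>x. exp (l * f x)) \<le> exp (K * l\<^sup>2)"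
  shows "measure_pmf.prob (Pi_pmf {..<N} dflt (\<lambda>_. p)) {X. real N * \<tau> \<le> (\<Sum>s<N. f (X s))}
           \<le> exp (- real N * min (\<tau>\<^sup>2 / (4 * K)) (\<tau> / 16))"
proof (cases "\<tau> = 0")
  case True
  then show ?thesis
    by simp
next
  case False
  define P where "P = Pi_pmf {..<N} dflt (\<lambda>_. p)"
  define l where "l = min (1 / 8) (\<tau> / (2 * K))"
  have l: "0 < l" "l \<le> 1 / 8"
    using K \<tau> False by (auto simp: l_def)
  have "finite (set_pmf P)"
    unfolding P_def set_Pi_pmf[OF finite_lessThan] using fin by (auto intro: finite_PiE_dflt)
  then have integrable: "integrable (measure_pmf P) (g :: _ \<Rightarrow> real)" for g
    by (rule integrable_measure_pmf_finite)
  have "measure_pmf.prob P {X. real N * \<tau> \<le> (\<Sum>s<N. f (X s))}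
      \<le> exp (- l * (real N * \<tau>)) * measure_pmf.expectation P (\<lambda>X. exp (l * (\<Sum>s<N. f (X s))))"
    using measure_pmf.Chernoff_ineq_ge[OF l(1), of P "space (measure_pmf P)"
        "\<lambda>X. \<Sum>s<N. f (X s)" "real N * \<tau>"]
      set_integral_space[OF integrable, of "\<lambda>X. exp (l * (\<Sum>s<N. f (X s)))"]
    by (simp add: integrable set_integrable_def)
  also have "measure_pmf.expectation P (\<lambda>X. exp (l * (\<Sum>s<N. f (X s))))
      = (\<Prod>s<N. measure_pmf.expectation p (\<lambda>x. exp (l * f x)))"
    unfolding P_def sum_distrib_left exp_sum[OF finite_lessThan]
    by (rule expectation_prod_Pi_pmf) (auto intro: integrable_measure_pmf_finite[OF fin])
  also have "\<dots> \<le> exp (K * l\<^sup>2) ^ N"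
    using mgf[of l] l by (simp add: power_mono Bochner_Integration.integral_nonneg)
  finally have "measure_pmf.prob P {X. real N * \<tau> \<le> (\<Sum>s<N. f (X s))}
      \<le> exp (real N * (K * l\<^sup>2 - l * \<tau>))"
    by (simp add: algebra_simps mult_left_mono flip: exp_add exp_of_nat_mult)
  also have "\<dots> \<le> exp (- real N * min (\<tau>\<^sup>2 / (4 * K)) (\<tau> / 16))"
    using mult_left_mono[OF bernstein_exponent_le[OF K \<tau>], of "real N"] by (simp add: l_def)
  finally show ?thesis
    unfolding P_def .
qed

lemma prob_abs_iid_sum_ge:
  fixes p :: "'a pmf" and f :: "'a \<Rightarrow> real" and K \<tau> :: real
  assumes fin: "finite (set_pmf p)" and K: "0 < K" and \<tau>: "0 \<le> \<tau>"
    and mgf: "\<And>l. \<bar>l\<bar> \<le> 1 / 8 \<Longrightarrow> measure_pmf.expectation p (\<lambda>x. exp (l * f x)) \<le> exp (K * l\<^sup>2)"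
  shows "measure_pmf.prob (Pi_pmf {..<N} dflt (\<lambda>_. p)) {X. real N * \<tau> \<le> \<bar>\<Sum>s<N. f (X s)\<bar>}
           \<le> 2 * exp (- real N * min (\<tau>\<^sup>2 / (4 * K)) (\<tau> / 16))"
proof -
  let ?P = "Pi_pmf {..<N} dflt (\<lambda>_. p)"
  have "{X. real N * \<tau> \<le> \<bar>\<Sum>s<N. f (X s)\<bar>}
      = {X. real N * \<tau> \<le> (\<Sum>s<N. f (X s))} \<union> {X. real N * \<tau> \<le> (\<Sum>s<N. - f (X s))}"
    by (auto simp: sum_negf abs_if)
  then have "measure_pmf.prob ?P {X. real N * \<tau> \<le> \<bar>\<Sum>s<N. f (X s)\<bar>}
      \<le> measure_pmf.prob ?P {X. real N * \<tau> \<le> (\<Sum>s<N. f (X s))}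
        + measure_pmf.prob ?P {X. real N * \<tau> \<le> (\<Sum>s<N. - f (X s))}"
    by (simp add: measure_Un_le)
  also have "\<dots> \<le> exp (- real N * min (\<tau>\<^sup>2 / (4 * K)) (\<tau> / 16))
      + exp (- real N * min (\<tau>\<^sup>2 / (4 * K)) (\<tau> / 16))"
    using mgf mgf[of "- _"]
    by (intro add_mono prob_iid_sum_ge[OF fin K \<tau>, where f = f]
        prob_iid_sum_ge[OF fin K \<tau>, where f = "\<lambda>x. - f x"]) auto
  finally show ?thesis
    by simp
qed

lemma vnorm_eq_L2_set: "vnorm d v = L2_set v {..<d}"
  by (simp add: vnorm_def L2_set_def)

lemma vnorm_nonneg [simp]: "0 \<le> vnorm d v"
  by (simp add: vnorm_eq_L2_set)

lemma power2_vnorm: "(vnorm d v)\<^sup>2 = (\<Sum>i<d. (v i)\<^sup>2)"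
  by (simp add: vnorm_def sum_nonneg)

lemma vnorm_eq_0_iff: "vnorm d v = 0 \<longleftrightarrow> (\<forall>i<d. v i = 0)"
  by (auto simp: vnorm_eq_L2_set L2_set_eq_0_iff)

lemma abs_coord_le_vnorm: "i < d \<Longrightarrow> \<bar>v i\<bar> \<le> vnorm d v"
  using member_le_L2_set[of "{..<d}" i "\<lambda>i. \<bar>v i\<bar>"] by (simp add: vnorm_eq_L2_set L2_set_def)

lemma vnorm_scale: "vnorm d (\<lambda>i. c * v i) = \<bar>c\<bar> * vnorm d v"
  by (simp add: vnorm_def power_mult_distrib real_sqrt_mult flip: sum_distrib_left)

lemma vnorm_mono:
  assumes "\<And>i. i < d \<Longrightarrow> \<bar>v i\<bar> \<le> \<bar>w i\<bar>"
  shows "vnorm d v \<le> vnorm d w"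
  unfolding vnorm_def using assms
  by (intro real_sqrt_le_mono sum_mono) (simp add: abs_le_square_iff)

lemma vnorm_add_le: "vnorm d (\<lambda>i. v i + w i) \<le> vnorm d v + vnorm d w"
  unfolding vnorm_eq_L2_set by (rule L2_set_triangle_ineq)

lemma vnorm_parallelogram:
  "(vnorm d (\<lambda>i. u i + v i))\<^sup>2 + (vnorm d (\<lambda>i. u i - v i))\<^sup>2 = 2 * (vnorm d u)\<^sup>2 + 2 * (vnorm d v)\<^sup>2"
  unfolding power2_vnorm
  by (simp add: sum_distrib_left power2_eq_square algebra_simps flip: sum.distrib)

lemma quadform_expand: "quadform d A w = (\<Sum>i<d. \<Sum>j<d. w i * w j * A i j)"
  unfolding quadform_def matvec_def by (simp add: sum_distrib_left mult_ac)

lemma quadform_diff: "quadform d (\<lambda>i j. A i j - B i j) w = quadform d A w - quadform d B w"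
  by (simp add: quadform_expand sum_subtractf algebra_simps)

definition bilin :: "nat \<Rightarrow> (nat \<Rightarrow> nat \<Rightarrow> real) \<Rightarrow> (nat \<Rightarrow> real) \<Rightarrow> (nat \<Rightarrow> real) \<Rightarrow> real" where
  "bilin d A u v = (\<Sum>i<d. u i * matvec d A v i)"

definition symmetric_mat :: "nat \<Rightarrow> (nat \<Rightarrow> nat \<Rightarrow> real) \<Rightarrow> bool" where
  "symmetric_mat d A \<longleftrightarrow> (\<forall>i<d. \<forall>j<d. A i j = A j i)"

lemma bilin_expand: "bilin d A u v = (\<Sum>i<d. \<Sum>j<d. u i * A i j * v j)"
  unfolding bilin_def matvec_def by (simp add: sum_distrib_left mult_ac)

lemma quadform_eq_bilin: "quadform d A v = bilin d A v v"
  unfolding quadform_def bilin_def ..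

lemma bilin_commute:
  assumes "symmetric_mat d A"
  shows "bilin d A u v = bilin d A v u"
proof -
  have "bilin d A u v = (\<Sum>j<d. \<Sum>i<d. u i * A i j * v j)"
    unfolding bilin_expand by (rule sum.swap)
  also have "\<dots> = bilin d A v u"
    unfolding bilin_expand using assms by (intro sum.cong refl) (auto simp: symmetric_mat_def mult_ac)
  finally show ?thesis .
qed

lemma bilin_add_left: "bilin d A (\<lambda>i. u i + v i) x = bilin d A u x + bilin d A v x"
  by (simp add: bilin_def sum.distrib algebra_simps)

lemma bilin_diff_left: "bilin d A (\<lambda>i. u i - v i) x = bilin d A u x - bilin d A v x"
  by (simp add: bilin_def sum_subtractf algebra_simps)

lemma bilin_scale_left: "bilin d A (\<lambda>i. c * u i) x = c * bilin d A u x"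
  by (simp add: bilin_def sum_distrib_left algebra_simps)

lemma bilin_add_right: "bilin d A x (\<lambda>i. u i + v i) = bilin d A x u + bilin d A x v"
  by (simp add: bilin_expand sum.distrib algebra_simps)

lemma bilin_diff_right: "bilin d A x (\<lambda>i. u i - v i) = bilin d A x u - bilin d A x v"
  by (simp add: bilin_expand sum_subtractf algebra_simps)

lemma bilin_scale_right: "bilin d A x (\<lambda>i. c * u i) = c * bilin d A x u"
  by (simp add: bilin_expand sum_distrib_left algebra_simps)

lemmas bilin_linear =
  bilin_add_left bilin_diff_left bilin_scale_left bilin_add_right bilin_diff_right bilin_scale_right

lemma quadform_polarization:
  assumes "symmetric_mat d A"
  shows "quadform d A (\<lambda>i. u i + v i) - quadform d A (\<lambda>i. u i - v i) = 4 * bilin d A u v"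
  using bilin_commute[OF assms, of v u] by (simp add: quadform_eq_bilin bilin_linear)

lemma quadform_diff_eq_bilin:
  assumes "symmetric_mat d A"
  shows "quadform d A u - quadform d A v = bilin d A (\<lambda>i. u i - v i) (\<lambda>i. u i + v i)"
  using bilin_commute[OF assms, of u v] by (simp add: quadform_eq_bilin bilin_linear)

lemma quadform_scale: "quadform d A (\<lambda>i. c * v i) = c\<^sup>2 * quadform d A v"
  by (simp add: quadform_eq_bilin bilin_linear power2_eq_square)

lemma bilin_eq_0_if_vnorm_eq_0: "vnorm d u = 0 \<or> vnorm d v = 0 \<Longrightarrow> bilin d A u v = 0"
  by (auto simp: vnorm_eq_0_iff bilin_expand)

lemma abs_bilin_le_average:
  assumes S: "symmetric_mat d A" and q: "\<And>u. \<bar>quadform d A u\<bar> \<le> q * (vnorm d u)\<^sup>2"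
  shows "\<bar>bilin d A u v\<bar> \<le> q * ((vnorm d u)\<^sup>2 + (vnorm d v)\<^sup>2) / 2"
proof -
  have "4 * \<bar>bilin d A u v\<bar>
      \<le> \<bar>quadform d A (\<lambda>i. u i + v i)\<bar> + \<bar>quadform d A (\<lambda>i. u i - v i)\<bar>"
    using quadform_polarization[OF S, of u v] by linarith
  also have "\<dots> \<le> q * (vnorm d (\<lambda>i. u i + v i))\<^sup>2 + q * (vnorm d (\<lambda>i. u i - v i))\<^sup>2"
    by (intro add_mono q)
  also have "\<dots> = 2 * q * ((vnorm d u)\<^sup>2 + (vnorm d v)\<^sup>2)"
    using vnorm_parallelogram[of d u v] by algebra
  finally show ?thesis
    by simp
qed

lemma abs_bilin_le:
  assumes S: "symmetric_mat d A" and q: "\<And>u. \<bar>quadform d A u\<bar> \<le> q * (vnorm d u)\<^sup>2"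
  shows "\<bar>bilin d A u v\<bar> \<le> q * vnorm d u * vnorm d v"
proof (cases "vnorm d u = 0 \<or> vnorm d v = 0")
  case True
  then show ?thesis
    using bilin_eq_0_if_vnorm_eq_0 by auto
next
  case False
  then have pos: "0 < vnorm d u" "0 < vnorm d v"
    using vnorm_nonneg[of d u] vnorm_nonneg[of d v] by linarith+
  \<comment> \<open>Rescaling to equal norms turns the arithmetic mean into the geometric mean.\<close>
  define c where "c = sqrt (vnorm d v / vnorm d u)"
  have c: "0 < c" "c\<^sup>2 = vnorm d v / vnorm d u"
    using pos by (auto simp: c_def)
  have "bilin d A u v = bilin d A (\<lambda>i. c * u i) (\<lambda>i. (1 / c) * v i)"
    using c by (simp only: bilin_scale_left bilin_scale_right) simp
  also have "\<bar>\<dots>\<bar> \<le> q * ((c * vnorm d u)\<^sup>2 + (vnorm d v / c)\<^sup>2) / 2"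
    using abs_bilin_le_average[OF S q, of "\<lambda>i. c * u i" "\<lambda>i. (1 / c) * v i"] c
    by (simp only: vnorm_scale) simp
  also have "(c * vnorm d u)\<^sup>2 + (vnorm d v / c)\<^sup>2 = 2 * (vnorm d u * vnorm d v)"
    using c pos by (simp add: power_mult_distrib power_divide field_simps power2_eq_square)
  finally show ?thesis
    by simp
qed

lemma vnorm_matvec_le:
  assumes S: "symmetric_mat d A" and q: "\<And>u. \<bar>quadform d A u\<bar> \<le> q * (vnorm d u)\<^sup>2"
    and "0 \<le> q"
  shows "vnorm d (matvec d A v) \<le> q * vnorm d v"
proof -
  have "(vnorm d (matvec d A v))\<^sup>2 = bilin d A (matvec d A v) v"
    unfolding power2_vnorm by (simp add: bilin_def power2_eq_square)
  also have "\<dots> \<le> q * vnorm d (matvec d A v) * vnorm d v"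
    using abs_bilin_le[OF S q] abs_le_D1 by blast
  finally have "vnorm d (matvec d A v) * vnorm d (matvec d A v)
      \<le> q * vnorm d v * vnorm d (matvec d A v)"
    by (simp add: power2_eq_square mult_ac)
  then show ?thesis
    using \<open>0 \<le> q\<close> vnorm_nonneg[of d "matvec d A v"]
    by (cases "vnorm d (matvec d A v) = 0") (auto simp: mult_le_cancel_right)
qed

lemma abs_quadform_le_of_unit_ball:
  assumes q: "\<And>v. vnorm d v \<le> 1 \<Longrightarrow> \<bar>quadform d A v\<bar> \<le> q"
  shows "\<bar>quadform d A u\<bar> \<le> q * (vnorm d u)\<^sup>2"
proof (cases "vnorm d u = 0")
  case True
  then show ?thesis
    using bilin_eq_0_if_vnorm_eq_0 by (simp add: quadform_eq_bilin)
next
  case False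
  then have pos: "0 < vnorm d u"
    using vnorm_nonneg[of d u] by linarith
  have "\<bar>quadform d A (\<lambda>i. (1 / vnorm d u) * u i)\<bar> \<le> q"
    using pos by (intro q) (simp only: vnorm_scale, simp)
  then have "\<bar>quadform d A u\<bar> / (vnorm d u)\<^sup>2 \<le> q"
    by (simp only: quadform_scale) (simp add: abs_mult power_divide)
  then show ?thesis
    using pos by (simp add: field_simps)
qed

lemma abs_quadform_le_sum_abs:
  assumes "vnorm d v \<le> 1"
  shows "\<bar>quadform d A v\<bar> \<le> (\<Sum>i<d. \<Sum>j<d. \<bar>A i j\<bar>)"
proof -
  have "\<bar>quadform d A v\<bar> \<le> (\<Sum>i<d. \<Sum>j<d. \<bar>v i * v j * A i j\<bar>)"
    unfolding quadform_expand by (rule order_trans[OF sum_abs sum_mono[OF sum_abs]])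
  also have "\<dots> \<le> (\<Sum>i<d. \<Sum>j<d. \<bar>A i j\<bar>)"
  proof (intro sum_mono)
    fix i j assume "i \<in> {..<d}" "j \<in> {..<d}"
    then have "\<bar>v i\<bar> \<le> 1" "\<bar>v j\<bar> \<le> 1"
      using abs_coord_le_vnorm[of _ d v] assms by fastforce+
    then have "\<bar>v i\<bar> * \<bar>v j\<bar> * \<bar>A i j\<bar> \<le> 1 * \<bar>A i j\<bar>"
      by (intro mult_right_mono mult_le_one) auto
    then show "\<bar>v i * v j * A i j\<bar> \<le> \<bar>A i j\<bar>"
      by (simp add: abs_mult)
  qed
  finally show ?thesis .
qed

lemma opnorm_le:
  assumes "\<And>v. vnorm d v \<le> 1 \<Longrightarrow> vnorm d (matvec d M v) \<le> B"
  shows "opnorm d M \<le> B"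
  unfolding opnorm_def using assms
  by (intro cSup_least) (auto intro!: exI[of _ "\<lambda>_. 0"] simp: vnorm_def)

section \<open>A net of the unit ball\<close>

definition grid :: "nat \<Rightarrow> real set" where
  "grid d = (\<lambda>k. real_of_int k / real (16 * d)) ` {- int (16 * d)..int (16 * d)}"

definition net :: "nat \<Rightarrow> (nat \<Rightarrow> real) set" where
  "net d = {w. (\<forall>i<d. w i \<in> grid d) \<and> (\<forall>i\<ge>d. w i = 0) \<and> vnorm d w \<le> 1}"

lemma net_subset_PiE_dflt: "net d \<subseteq> PiE_dflt {..<d} 0 (\<lambda>_. grid d)"
  unfolding net_def PiE_dflt_def by auto

lemma finite_net: "finite (net d)"
  by (rule finite_subset[OF net_subset_PiE_dflt]) (auto simp: grid_def)

lemma zero_in_net: "(\<lambda>_. 0) \<in> net d"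
proof -
  have "(0::real) \<in> grid d"
    unfolding grid_def by (rule image_eqI[of _ _ 0]) auto
  then show ?thesis
    by (simp add: net_def vnorm_def)
qed

lemma card_net_le: "card (net d) \<le> (32 * d + 1) ^ d"
proof -
  have "card (net d) \<le> card (PiE_dflt {..<d} (0::real) (\<lambda>_. grid d))"
    by (rule card_mono[OF _ net_subset_PiE_dflt]) (auto simp: grid_def)
  also have "\<dots> = card (grid d) ^ d"
    by (simp add: card_PiE_dflt grid_def)
  also have "card (grid d) \<le> card {- int (16 * d)..int (16 * d)}"
    unfolding grid_def by (rule card_image_le) simp
  also have "\<dots> = 32 * d + 1"
    by simp
  finally show ?thesis
    by (simp add: power_mono)
qed

lemma card_net_le_pow:
  assumes "2 \<le> d"
  shows "real (card (net d)) \<le> (2 * real d) ^ (4 * d)"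
proof -
  have "8 \<le> real d ^ 3"
    using power_mono[of 2 "real d" 3] assms by simp
  then have "8 * real d \<le> real d ^ 3 * real d"
    by (intro mult_right_mono) auto
  moreover have "(2 * real d) ^ 4 = 16 * (real d ^ 3 * real d)"
    by (simp add: eval_nat_numeral)
  ultimately have "32 * real d + 1 \<le> (2 * real d) ^ 4"
    using assms by linarith
  have "real (card (net d)) \<le> real ((32 * d + 1) ^ d)"
    using card_net_le[of d] by (simp only: of_nat_le_iff)
  also have "\<dots> = (32 * real d + 1) ^ d"
    by (simp add: add.commute)
  also have "\<dots> \<le> ((2 * real d) ^ 4) ^ d"
    using \<open>32 * real d + 1 \<le> (2 * real d) ^ 4\<close> by (intro power_mono) auto
  finally show ?thesis
    by (simp add: power_mult)
qed

lemma ln_card_net_le: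
  assumes d: "2 \<le> d" and \<delta>: "0 < \<delta>" "\<delta> < 1"
  shows "ln (2 * real (card (net d)) / \<delta>) \<le> 5 * real d * ln (2 * real d / \<delta>)"
proof -
  define b where "b = 2 * real d / \<delta>"
  have b: "2 * real d \<le> b" "2 / \<delta> \<le> b" "1 \<le> b"
    using d \<delta> by (auto simp: b_def field_simps)
  have "card (net d) \<noteq> 0"
    using finite_net zero_in_net by (auto simp: card_eq_0_iff)
  then have pos: "0 < 2 * real (card (net d)) / \<delta>"
    using \<delta> by simp
  have "real (card (net d)) \<le> b ^ (4 * d)"
    using order_trans[OF card_net_le_pow[OF d] power_mono[OF b(1)]] by simp
  then have "(2 / \<delta>) * real (card (net d)) \<le> b * b ^ (4 * d)"
    using b by (intro mult_mono) auto
  then have "2 * real (card (net d)) / \<delta> \<le> b ^ (4 * d + 1)"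
    by simp
  then have "ln (2 * real (card (net d)) / \<delta>) \<le> ln (b ^ (4 * d + 1))"
    using pos by (intro ln_mono) simp_all
  also have "\<dots> = real (4 * d + 1) * ln b"
    by (rule ln_realpow)
  also have "\<dots> \<le> 5 * real d * ln b"
    using d b by (simp add: mult_right_mono)
  finally show ?thesis
    by (simp add: b_def)
qed

lemma round_toward_zero:
  fixes y m :: real
  assumes m: "0 < m" and y: "\<bar>y\<bar> \<le> 1"
  defines "k \<equiv> (if 0 \<le> y then \<lfloor>\<bar>y\<bar> * m\<rfloor> else - \<lfloor>\<bar>y\<bar> * m\<rfloor>)"
  shows "\<bar>real_of_int k\<bar> \<le> m" "\<bar>k / m\<bar> \<le> \<bar>y\<bar>" "\<bar>y - k / m\<bar> \<le> 1 / m"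
proof -
  define z where "z = \<bar>y\<bar> * m"
  have z: "0 \<le> z" "z \<le> m" "0 \<le> \<lfloor>z\<rfloor>" "\<lfloor>z\<rfloor> \<le> z" "z < \<lfloor>z\<rfloor> + 1"
    using m y mult_right_mono[OF y, of m] by (auto simp: z_def)
  have "y = z / m \<and> k = \<lfloor>z\<rfloor> \<or> y = - z / m \<and> k = - \<lfloor>z\<rfloor>"
    using m by (auto simp: k_def z_def)
  then have abs_k: "\<bar>real_of_int k\<bar> = \<lfloor>z\<rfloor>" and err: "\<bar>y - k / m\<bar> = (z - \<lfloor>z\<rfloor>) / m"
    using m z(3,4) by (auto simp: abs_divide simp flip: diff_divide_distrib)
  have "\<lfloor>z\<rfloor> \<le> m"
    using z(2,4) by linarith
  then show "\<bar>real_of_int k\<bar> \<le> m"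
    unfolding abs_k .
  show "\<bar>k / m\<bar> \<le> \<bar>y\<bar>"
    using abs_k z m by (simp add: abs_divide z_def field_simps)
  show "\<bar>y - k / m\<bar> \<le> 1 / m"
    unfolding err using z(5) m by (intro divide_right_mono) linarith+
qed

text \<open>Rounding every coordinate towards zero keeps the point inside the unit ball.\<close>
lemma net_approximation:
  assumes d: "1 \<le> d" and v: "vnorm d v \<le> 1"
  obtains w where "w \<in> net d" "vnorm d (\<lambda>i. v i - w i) \<le> 1 / 16"
proof -
  define m where "m = real (16 * d)"
  define k where "k i = (if 0 \<le> v i then \<lfloor>\<bar>v i\<bar> * m\<rfloor> else - \<lfloor>\<bar>v i\<bar> * m\<rfloor>)" for i
  define w where "w i = (if i < d then real_of_int (k i) / m else 0)" for i
  have m: "0 < m"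
    using d by (simp add: m_def)
  have round_k: "\<bar>real_of_int (k i)\<bar> \<le> m" "\<bar>k i / m\<bar> \<le> \<bar>v i\<bar>" "\<bar>v i - k i / m\<bar> \<le> 1 / m"
    if "i < d" for i
    using round_toward_zero[OF m order_trans[OF abs_coord_le_vnorm[OF that] v]]
    unfolding k_def by auto
  have round: "\<bar>real_of_int (k i)\<bar> \<le> m" "\<bar>w i\<bar> \<le> \<bar>v i\<bar>" "\<bar>v i - w i\<bar> \<le> 1 / m" if "i < d" for i
    using round_k[OF that] that by (simp_all add: w_def)
  have "w \<in> net d"
  proof -
    have "w i \<in> grid d" if "i < d" for i
      using round(1)[OF that] that unfolding grid_def w_def m_def by (auto simp: abs_le_iff)
    moreover have "vnorm d w \<le> vnorm d v"
      using round(2) by (rule vnorm_mono)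
    ultimately show ?thesis
      using v by (auto simp: net_def w_def)
  qed
  moreover have "vnorm d (\<lambda>i. v i - w i) \<le> vnorm d (\<lambda>_. 1 / m)"
    using round(3) m by (intro vnorm_mono) simp
  moreover have "vnorm d (\<lambda>_. 1 / m) \<le> 1 / 16"
  proof -
    have "1 * sqrt (real d) \<le> sqrt (real d) * sqrt (real d)"
      using d by (intro mult_right_mono) auto
    then show ?thesis
      using d by (simp add: vnorm_eq_L2_set L2_set_constant m_def field_simps)
  qed
  ultimately show ?thesis
    using that by force
qed

text \<open>With \<open>q\<close> the supremum of \<open>|w\<^sup>T A w|\<close> over the unit ball, passing through the nearest net
  point gives \<open>q \<le> t + q/8\<close>.\<close>
lemma abs_quadform_le_of_net:
  assumes S: "symmetric_mat d A" and d: "1 \<le> d"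
    and net: "\<And>w. w \<in> net d \<Longrightarrow> \<bar>quadform d A w\<bar> \<le> t"
  shows "\<bar>quadform d A u\<bar> \<le> 2 * t * (vnorm d u)\<^sup>2"
proof -
  define Q where "Q = {\<bar>quadform d A v\<bar> | v. vnorm d v \<le> 1}"
  define q where "q = Sup Q"
  have bdd: "bdd_above Q"
    unfolding Q_def bdd_above_def using abs_quadform_le_sum_abs by blast
  have le_q: "\<bar>quadform d A v\<bar> \<le> q" if "vnorm d v \<le> 1" for v
    unfolding q_def using that bdd by (intro cSup_upper) (auto simp: Q_def)
  have quad_q: "\<bar>quadform d A v\<bar> \<le> q * (vnorm d v)\<^sup>2" for v
    by (rule abs_quadform_le_of_unit_ball[OF le_q])
  have "0 \<le> q"
    using le_q[of "\<lambda>_. 0"] by (simp add: vnorm_def)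
  have "0 \<le> t"
    using net[OF zero_in_net] by (simp add: quadform_def)
  have "\<bar>quadform d A v\<bar> \<le> t + q / 8" if v: "vnorm d v \<le> 1" for v
  proof -
    obtain w where w: "w \<in> net d" and vw: "vnorm d (\<lambda>i. v i - w i) \<le> 1 / 16"
      using net_approximation[OF d v] .
    have "vnorm d (\<lambda>i. v i + w i) \<le> 2"
      using vnorm_add_le[of d v w] v w by (auto simp: net_def)
    have "\<bar>quadform d A v - quadform d A w\<bar>
        \<le> q * vnorm d (\<lambda>i. v i - w i) * vnorm d (\<lambda>i. v i + w i)"
      unfolding quadform_diff_eq_bilin[OF S] by (rule abs_bilin_le[OF S quad_q])
    also have "\<dots> \<le> q * (1 / 16) * 2"
      using vw \<open>vnorm d (\<lambda>i. v i + w i) \<le> 2\<close> \<open>0 \<le> q\<close> by (intro mult_mono mult_left_mono) auto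
    finally have "\<bar>quadform d A v - quadform d A w\<bar> \<le> q / 8"
      by simp
    then show ?thesis
      using net[OF w] by linarith
  qed
  then have "q \<le> t + q / 8"
    unfolding q_def Q_def by (intro cSup_least) (auto intro!: exI[of _ "\<lambda>_. 0"] simp: vnorm_def)
  then have "q \<le> 2 * t"
    using \<open>0 \<le> t\<close> by linarith
  then show ?thesis
    using quad_q[of u] mult_right_mono[of q "2 * t" "(vnorm d u)\<^sup>2"] by simp
qed

section \<open>Rademacher vectors\<close>

definition dot :: "nat \<Rightarrow> (nat \<Rightarrow> real) \<Rightarrow> (nat \<Rightarrow> real) \<Rightarrow> real" where
  "dot d v w = (\<Sum>i<d. v i * w i)"

definition sign_vectors :: "nat \<Rightarrow> (nat \<Rightarrow> real) set" where
  "sign_vectors d = PiE_dflt {..<d} 0 (\<lambda>_. {-1, 1})"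

definition rademacher_vec :: "nat \<Rightarrow> (nat \<Rightarrow> real) pmf" where
  "rademacher_vec d = Pi_pmf {..<d} 0 (\<lambda>_. pmf_of_set {-1, 1})"

lemma finite_sign_vectors: "finite (sign_vectors d)"
  unfolding sign_vectors_def by (rule finite_PiE_dflt) auto

lemma sign_vectors_nonempty: "sign_vectors d \<noteq> {}"
  unfolding sign_vectors_def by simp

lemma sign_vectors_iff:
  "x \<in> sign_vectors d \<longleftrightarrow> (\<forall>i<d. x i = -1 \<or> x i = 1) \<and> (\<forall>i\<ge>d. x i = 0)"
  unfolding sign_vectors_def PiE_dflt_def by (auto simp: not_less)

lemma abs_sign_vector: "x \<in> sign_vectors d \<Longrightarrow> i < d \<Longrightarrow> \<bar>x i\<bar> = 1"
  unfolding sign_vectors_iff by force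

lemma rademacher_vec_eq_pmf_of_set: "rademacher_vec d = pmf_of_set (sign_vectors d)"
  unfolding rademacher_vec_def sign_vectors_def by (rule Pi_pmf_of_set) auto

lemma set_pmf_rademacher_vec: "set_pmf (rademacher_vec d) = sign_vectors d"
  unfolding rademacher_vec_eq_pmf_of_set
  by (rule set_pmf_of_set[OF sign_vectors_nonempty finite_sign_vectors])

lemma finite_set_pmf_rademacher_vec: "finite (set_pmf (rademacher_vec d))"
  unfolding set_pmf_rademacher_vec by (rule finite_sign_vectors)

lemma integrable_rademacher_vec [simp]:
  "integrable (measure_pmf (rademacher_vec d)) (f :: _ \<Rightarrow> real)"
  by (rule integrable_measure_pmf_finite[OF finite_set_pmf_rademacher_vec])

lemma samples_eq_PiE_dflt: "samples N d = PiE_dflt {..<N} (\<lambda>_. 0) (\<lambda>_. sign_vectors d)"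
  unfolding samples_def PiE_dflt_def sign_vectors_iff
  by (auto simp: fun_eq_iff not_less)

lemma pmf_of_samples_eq_Pi_pmf:
  "pmf_of_set (samples N d) = Pi_pmf {..<N} (\<lambda>_. 0) (\<lambda>_. rademacher_vec d)"
  unfolding samples_eq_PiE_dflt rademacher_vec_eq_pmf_of_set
  by (rule Pi_pmf_of_set[symmetric]) (auto simp: finite_sign_vectors sign_vectors_nonempty)

definition flip_coord :: "nat \<Rightarrow> (nat \<Rightarrow> real) \<Rightarrow> nat \<Rightarrow> real" where
  "flip_coord k x = x(k := - x k)"

lemma bij_betw_flip_coord: "k < d \<Longrightarrow> bij_betw (flip_coord k) (sign_vectors d) (sign_vectors d)"
  by (rule bij_betw_byWitness[where f' = "flip_coord k"])
     (auto simp: flip_coord_def sign_vectors_iff)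

lemma rademacher_expectation_odd_eq_0:
  assumes "k < d" and odd: "\<And>x. f (flip_coord k x) = - (f x :: real)"
  shows "measure_pmf.expectation (rademacher_vec d) f = 0"
proof -
  have "(\<Sum>x\<in>sign_vectors d. f x) = (\<Sum>x\<in>sign_vectors d. f (flip_coord k x))"
    by (rule sum.reindex_bij_betw[OF bij_betw_flip_coord[OF \<open>k < d\<close>], symmetric])
  also have "\<dots> = - (\<Sum>x\<in>sign_vectors d. f x)"
    by (simp add: odd sum_negf)
  finally show ?thesis
    by (simp add: rademacher_vec_eq_pmf_of_set integral_pmf_of_set finite_sign_vectors
        sign_vectors_nonempty)
qed

lemma prob_rademacher_dot_sq_ge:
  assumes w: "vnorm d w \<le> 1" and k: "0 \<le> k"
  shows "measure_pmf.prob (rademacher_vec d) {x. k \<le> (dot d w x)\<^sup>2} \<le> 2 * exp (- k / 2)"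
proof (cases "vnorm d w = 0")
  case True
  then have "dot d w x = 0" for x
    by (simp add: vnorm_eq_0_iff dot_def)
  then show ?thesis
    using k by (cases "k = 0") auto
next
  case False
  define \<mu> where "\<mu> = (\<Sum>i<d. measure_pmf.expectation (rademacher_vec d) (\<lambda>x. w i * x i))"
  interpret Hoeffding_ineq "measure_pmf (rademacher_vec d)" "{..<d}" "\<lambda>i x. w i * x i"
    "\<lambda>i. - \<bar>w i\<bar>" "\<lambda>i. \<bar>w i\<bar>" \<mu>
  proof unfold_locales
    show "prob_space.indep_vars (measure_pmf (rademacher_vec d)) (\<lambda>_. borel) (\<lambda>i x. w i * x i) {..<d}"
      unfolding rademacher_vec_def
      by (rule prob_space.indep_vars_compose2[OF measure_pmf.prob_space_axioms indep_vars_Pi_pmf])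
         auto
    show "AE x in measure_pmf (rademacher_vec d). w i * x i \<in> {- \<bar>w i\<bar>..\<bar>w i\<bar>}"
      if "i \<in> {..<d}" for i
      using that by (intro AE_pmfI) (auto simp: set_pmf_rademacher_vec sign_vectors_iff)
  qed (auto simp: \<mu>_def)
  have "\<mu> = 0"
    unfolding \<mu>_def by (intro sum.neutral ballI rademacher_expectation_odd_eq_0)
      (auto simp: flip_coord_def)
  have width: "(\<Sum>i<d. (\<bar>w i\<bar> - - \<bar>w i\<bar>)\<^sup>2) = 4 * (vnorm d w)\<^sup>2"
    by (simp add: power2_vnorm sum_distrib_left power_mult_distrib)
  have "{x. k \<le> (dot d w x)\<^sup>2} = {x \<in> space (measure_pmf (rademacher_vec d)).
          sqrt k \<le> \<bar>(\<Sum>i<d. w i * x i) - \<mu>\<bar>}"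
    using \<open>\<mu> = 0\<close> k by (auto simp: dot_def real_le_rsqrt simp flip: real_sqrt_abs)
  also have "measure_pmf.prob (rademacher_vec d) \<dots> \<le> 2 * exp (- 2 * (sqrt k)\<^sup>2 / (4 * (vnorm d w)\<^sup>2))"
    using Hoeffding_ineq_abs_ge[of "sqrt k"] False k unfolding width by simp
  also have "\<dots> \<le> 2 * exp (- k / 2)"
    using False w k by (simp add: field_simps power_le_one mult_left_le)
  finally show ?thesis .
qed

lemma expectation_exp_dot_sq_le:
  assumes "vnorm d w \<le> 1"
  shows "measure_pmf.expectation (rademacher_vec d) (\<lambda>x. exp ((dot d w x)\<^sup>2 / 4)) \<le> 14"
  using assms
  by (intro expectation_exp_quarter_le_of_tail finite_set_pmf_rademacher_vec
      prob_rademacher_dot_sq_ge) auto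

section \<open>Concentration of the empirical matrix\<close>

text \<open>The population matrix \<open>E[y x x\<^sup>T] = e\<^sub>1 e\<^sub>2\<^sup>T + e\<^sub>2 e\<^sub>1\<^sup>T\<close>.\<close>
definition Mpop :: "nat \<Rightarrow> nat \<Rightarrow> real" where
  "Mpop i j = (if (i = 0 \<and> j = 1) \<or> (i = 1 \<and> j = 0) then 1 else 0)"

lemma expectation_label_moment:
  assumes d: "2 \<le> d" and "i < d" "j < d"
  shows "measure_pmf.expectation (rademacher_vec d) (\<lambda>x. x 0 * x 1 * x i * x j) = Mpop i j"
proof (cases "(i = 0 \<and> j = 1) \<or> (i = 1 \<and> j = 0)")
  case True
  have "x 0 * x 1 * x i * x j = 1" if "x \<in> sign_vectors d" for x
  proof -
    have "x 0 * x 0 = 1" "x 1 * x 1 = 1"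
      using abs_sign_vector[OF that, of 0] abs_sign_vector[OF that, of 1] d
        abs_mult_self_eq[of "x 0"] abs_mult_self_eq[of "x 1"] by simp_all
    then show ?thesis
      using True by (auto simp: mult_ac)
  qed
  then have "measure_pmf.expectation (rademacher_vec d) (\<lambda>x. x 0 * x 1 * x i * x j)
      = measure_pmf.expectation (rademacher_vec d) (\<lambda>_. 1)"
    by (intro integral_cong_AE AE_pmfI) (auto simp: set_pmf_rademacher_vec)
  then show ?thesis
    using True by (simp add: Mpop_def)
next
  case False
  obtain k where "k < d" and odd: "\<And>x. flip_coord k x 0 * flip_coord k x 1 * flip_coord k x i
      * flip_coord k x j = - (x 0 * x 1 * x i * x j)"
  proof (cases "i = j")
    case True
    show ?thesis
      by (rule that[of "if i = 0 then 1 else 0"]) (use d True in \<open>simp_all add: flip_coord_def\<close>)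
  next
    case False
    show ?thesis
      by (rule that[of "if i \<noteq> 0 \<and> i \<noteq> 1 then i else j"])
         (use \<open>i < d\<close> \<open>j < d\<close> False \<open>\<not> ((i = 0 \<and> j = 1) \<or> (i = 1 \<and> j = 0))\<close> in
           \<open>auto simp: flip_coord_def\<close>)
  qed
  then show ?thesis
    using False rademacher_expectation_odd_eq_0[where f = "\<lambda>x. x 0 * x 1 * x i * x j", OF \<open>k < d\<close> odd]
    by (simp add: Mpop_def)
qed

definition label_quad :: "nat \<Rightarrow> (nat \<Rightarrow> real) \<Rightarrow> (nat \<Rightarrow> real) \<Rightarrow> real" where
  "label_quad d w x = x 0 * x 1 * (dot d w x)\<^sup>2"

lemma label_quad_expand:
  "label_quad d w x = (\<Sum>i<d. \<Sum>j<d. w i * w j * (x 0 * x 1 * x i * x j))"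
  unfolding label_quad_def dot_def power2_eq_square sum_product
  by (simp add: sum_distrib_left mult_ac)

lemma matvec_Mpop:
  assumes "2 \<le> d"
  shows "matvec d Mpop v i = (if i = 0 then v 1 else 0) + (if i = 1 then v 0 else 0)"
proof -
  have "matvec d Mpop v i
      = (\<Sum>j<d. (if i = 0 \<and> j = 1 then v j else 0) + (if i = 1 \<and> j = 0 then v j else 0))"
    unfolding matvec_def Mpop_def by (intro sum.cong refl) auto
  then show ?thesis
    using assms by (simp add: sum.distrib)
qed

lemma quadform_Mpop:
  assumes "2 \<le> d"
  shows "quadform d Mpop w = 2 * w 0 * w 1"
proof -
  have "quadform d Mpop w
      = (\<Sum>i<d. (if i = 0 then w 0 * w 1 else 0) + (if i = 1 then w 1 * w 0 else 0))"
    unfolding quadform_def matvec_Mpop[OF assms] by (intro sum.cong refl) auto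
  then show ?thesis
    using assms by (simp add: sum.distrib)
qed

lemma expectation_label_quad:
  assumes "2 \<le> d"
  shows "measure_pmf.expectation (rademacher_vec d) (label_quad d w) = quadform d Mpop w"
proof -
  have "label_quad d w = (\<lambda>x. \<Sum>i<d. \<Sum>j<d. w i * w j * (x 0 * x 1 * x i * x j))"
    by (rule ext) (rule label_quad_expand)
  then have "measure_pmf.expectation (rademacher_vec d) (label_quad d w)
      = (\<Sum>i<d. \<Sum>j<d. w i * w j
           * measure_pmf.expectation (rademacher_vec d) (\<lambda>x. x 0 * x 1 * x i * x j))"
    by (simp add: Bochner_Integration.integral_sum)
  also have "\<dots> = quadform d Mpop w"
    unfolding quadform_expand using assms
    by (intro sum.cong refl) (simp only: expectation_label_moment lessThan_iff)
  finally show ?thesis .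
qed

lemma abs_quadform_Mpop_le:
  assumes "2 \<le> d"
  shows "\<bar>quadform d Mpop w\<bar> \<le> (vnorm d w)\<^sup>2"
proof -
  have "(\<Sum>i\<in>{0, 1}. (w i)\<^sup>2) \<le> (\<Sum>i<d. (w i)\<^sup>2)"
    using assms by (intro sum_mono2) auto
  moreover have "\<bar>2 * w 0 * w 1\<bar> \<le> (w 0)\<^sup>2 + (w 1)\<^sup>2"
    using sum_squares_bound[of "w 0" "w 1"] sum_squares_bound[of "w 0" "- w 1"]
    by (auto simp: abs_if)
  ultimately show ?thesis
    using assms by (simp add: quadform_Mpop power2_vnorm)
qed

lemma symmetric_Mpop: "symmetric_mat d Mpop"
  unfolding symmetric_mat_def Mpop_def by auto

lemma symmetric_Mhat_minus_Mpop: "symmetric_mat d (\<lambda>i j. Mhat N X i j - Mpop i j)"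
  unfolding symmetric_mat_def Mhat_def Mpop_def by (auto simp: mult_ac)

lemma mgf_label_quad_centered_le:
  assumes d: "2 \<le> d" and w: "vnorm d w \<le> 1" and l: "\<bar>l\<bar> \<le> 1 / 8"
  shows "measure_pmf.expectation (rademacher_vec d)
           (\<lambda>x. exp (l * (label_quad d w x - quadform d Mpop w))) \<le> exp (2400 * l\<^sup>2)"
proof (rule mgf_le_of_exp_quarter_moment[OF finite_set_pmf_rademacher_vec _ _ _ l])
  show "measure_pmf.expectation (rademacher_vec d) (\<lambda>x. label_quad d w x - quadform d Mpop w) = 0"
    using d by (simp add: expectation_label_quad)
  show "measure_pmf.expectation (rademacher_vec d) (\<lambda>x. exp ((dot d w x)\<^sup>2 / 4)) \<le> 14"
    using w by (rule expectation_exp_dot_sq_le)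
  fix x assume "x \<in> set_pmf (rademacher_vec d)"
  then have "\<bar>label_quad d w x\<bar> = (dot d w x)\<^sup>2"
    using abs_sign_vector[of x d 0] abs_sign_vector[of x d 1] d
    by (simp add: label_quad_def abs_mult set_pmf_rademacher_vec)
  moreover have "\<bar>quadform d Mpop w\<bar> \<le> 1"
    using abs_quadform_Mpop_le[OF d, of w] w power_le_one[of "vnorm d w" 2] by simp
  ultimately show "\<bar>label_quad d w x - quadform d Mpop w\<bar> \<le> (dot d w x)\<^sup>2 + 1"
    by linarith
qed

lemma quadform_Mhat: "quadform d (Mhat N X) w = (\<Sum>s<N. label_quad d w (X s)) / real N"
proof -
  have "quadform d (Mhat N X) w
      = (\<Sum>i<d. \<Sum>j<d. \<Sum>s<N. w i * w j * (X s 0 * X s 1 * X s i * X s j)) / real N"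
    by (simp add: quadform_expand Mhat_def sum_distrib_left sum_divide_distrib mult_ac)
  also have "\<dots> = (\<Sum>s<N. label_quad d w (X s)) / real N"
    by (simp add: label_quad_expand sum.swap[of _ "{..<N}"])
  finally show ?thesis .
qed

lemma prob_quadform_Mhat_deviation:
  assumes d: "2 \<le> d" and N: "1 \<le> N" and w: "vnorm d w \<le> 1" and \<tau>: "0 \<le> \<tau>"
  shows "measure_pmf.prob (pmf_of_set (samples N d))
           {X. \<tau> < \<bar>quadform d (Mhat N X) w - quadform d Mpop w\<bar>}
         \<le> 2 * exp (- real N * min (\<tau>\<^sup>2 / 9600) (\<tau> / 16))"
proof -
  define f where "f x = label_quad d w x - quadform d Mpop w" for x
  have dev: "quadform d (Mhat N X) w - quadform d Mpop w = (\<Sum>s<N. f (X s)) / real N" for X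
    using N by (simp add: quadform_Mhat f_def sum_subtractf field_simps)
  have "{X. \<tau> < \<bar>quadform d (Mhat N X) w - quadform d Mpop w\<bar>}
      \<subseteq> {X. real N * \<tau> \<le> \<bar>\<Sum>s<N. f (X s)\<bar>}"
    using N by (auto simp: dev abs_divide field_simps)
  then have "measure_pmf.prob (pmf_of_set (samples N d))
      {X. \<tau> < \<bar>quadform d (Mhat N X) w - quadform d Mpop w\<bar>}
      \<le> measure_pmf.prob (Pi_pmf {..<N} (\<lambda>_. 0) (\<lambda>_. rademacher_vec d))
           {X. real N * \<tau> \<le> \<bar>\<Sum>s<N. f (X s)\<bar>}"
    unfolding pmf_of_samples_eq_Pi_pmf by (rule measure_pmf.finite_measure_mono) simp
  also have "\<dots> \<le> 2 * exp (- real N * min (\<tau>\<^sup>2 / (4 * 2400)) (\<tau> / 16))"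
    unfolding f_def
    by (intro prob_abs_iid_sum_ge finite_set_pmf_rademacher_vec \<tau> mgf_label_quad_centered_le d w)
       auto
  finally show ?thesis
    by simp
qed

lemma prob_net_deviation_le:
  assumes d: "2 \<le> d" and N: "1 \<le> N" and \<tau>: "0 \<le> \<tau>"
  shows "measure_pmf.prob (pmf_of_set (samples N d))
           {X. \<exists>w\<in>net d. \<tau> < \<bar>quadform d (Mhat N X) w - quadform d Mpop w\<bar>}
         \<le> real (card (net d)) * (2 * exp (- real N * min (\<tau>\<^sup>2 / 9600) (\<tau> / 16)))"
proof -
  have "{X. \<exists>w\<in>net d. \<tau> < \<bar>quadform d (Mhat N X) w - quadform d Mpop w\<bar>}
      = (\<Union>w\<in>net d. {X. \<tau> < \<bar>quadform d (Mhat N X) w - quadform d Mpop w\<bar>})"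
    by auto
  also have "measure_pmf.prob (pmf_of_set (samples N d)) \<dots>
      \<le> (\<Sum>w\<in>net d. measure_pmf.prob (pmf_of_set (samples N d))
            {X. \<tau> < \<bar>quadform d (Mhat N X) w - quadform d Mpop w\<bar>})"
    by (rule measure_pmf.finite_measure_subadditive_finite[OF finite_net]) auto
  also have "\<dots> \<le> (\<Sum>w\<in>net d. 2 * exp (- real N * min (\<tau>\<^sup>2 / 9600) (\<tau> / 16)))"
    using d N \<tau> by (intro sum_mono prob_quadform_Mhat_deviation) (auto simp: net_def)
  finally show ?thesis
    by simp
qed

lemma opnorm_Mhat_le_of_net:
  assumes d: "2 \<le> d"
    and net: "\<And>w. w \<in> net d \<Longrightarrow> \<bar>quadform d (Mhat N X) w - quadform d Mpop w\<bar> \<le> t"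
  shows "opnorm d (Mhat N X) \<le> 1 + 2 * t"
proof (rule opnorm_le)
  define D where "D = (\<lambda>i j. Mhat N X i j - Mpop i j)"
  have "\<bar>quadform d D u\<bar> \<le> 2 * t * (vnorm d u)\<^sup>2" for u
    using d net
    by (intro abs_quadform_le_of_net) (auto simp: D_def quadform_diff symmetric_Mhat_minus_Mpop)
  moreover have "0 \<le> t"
    using net[OF zero_in_net] by simp
  ultimately have D: "vnorm d (matvec d D v) \<le> 2 * t * vnorm d v" for v
    by (intro vnorm_matvec_le) (auto simp: D_def symmetric_Mhat_minus_Mpop)
  have Mpop: "vnorm d (matvec d Mpop v) \<le> 1 * vnorm d v" for v
    using abs_quadform_Mpop_le[OF d] by (intro vnorm_matvec_le symmetric_Mpop) auto
  fix v :: "nat \<Rightarrow> real"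
  assume v: "vnorm d v \<le> 1"
  have "matvec d (Mhat N X) v = (\<lambda>i. matvec d Mpop v i + matvec d D v i)"
    by (simp add: matvec_def D_def fun_eq_iff algebra_simps flip: sum.distrib)
  then have "vnorm d (matvec d (Mhat N X) v) \<le> vnorm d (matvec d Mpop v) + vnorm d (matvec d D v)"
    by (simp add: vnorm_add_le)
  also have "\<dots> \<le> 1 + 2 * t"
    using Mpop[of v] D[of v] v \<open>0 \<le> t\<close> mult_left_mono[OF v, of "2 * t"] by linarith
  finally show "vnorm d (matvec d (Mhat N X) v) \<le> 1 + 2 * t" .
qed

lemma one_plus_twice_threshold_le_Bnd:
  fixes \<Lambda> :: real
  assumes N: "1 \<le> N" and \<Lambda>: "0 \<le> \<Lambda>" "\<Lambda> \<le> 5 * real d * ln (2 * real d / \<delta>)"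
  defines "\<tau> \<equiv> sqrt (4 * 2400 * \<Lambda> / real N) + 16 * \<Lambda> / real N"
  shows "1 + 2 * \<tau> \<le> Bnd 1000 N d \<delta>"
proof -
  define r where "r = real d * ln (2 * real d / \<delta>) / real N"
  have ratio: "\<Lambda> / real N \<le> 5 * r"
    using N \<Lambda> by (simp add: r_def divide_right_mono)
  moreover have "0 \<le> \<Lambda> / real N"
    using \<Lambda> by simp
  ultimately have "0 \<le> r"
    by linarith
  have "sqrt (4 * 2400 * \<Lambda> / real N) \<le> sqrt (48000 * r)"
    using ratio by simp
  also have "\<dots> \<le> 220 * sqrt r"
    using \<open>0 \<le> r\<close> real_sqrt_le_mono[of 48000 "220\<^sup>2"]
    by (simp add: real_sqrt_mult mult_right_mono)
  finally have "2 * \<tau> \<le> 440 * sqrt r + 160 * r"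
    using ratio by (simp add: \<tau>_def)
  also have "\<dots> \<le> 1000 * (sqrt r + r)"
    using \<open>0 \<le> r\<close> by simp
  finally show ?thesis
    by (simp add: Bnd_def r_def)
qed

lemma prob_opnorm_Mhat_le_Bnd:
  assumes d: "2 \<le> d" and N: "1 \<le> N" and \<delta>: "0 < \<delta>" "\<delta> < 1"
  shows "1 - \<delta> \<le> measure_pmf.prob (pmf_of_set (samples N d))
                    {X. opnorm d (Mhat N X) \<le> Bnd 1000 N d \<delta>}"
proof -
  define P where "P = pmf_of_set (samples N d)"
  define c where "c = real (card (net d))"
  define \<Lambda> where "\<Lambda> = ln (2 * c / \<delta>)"
  define \<tau> where "\<tau> = sqrt (4 * 2400 * \<Lambda> / real N) + 16 * \<Lambda> / real N"
  define Bad where "Bad = {X. \<exists>w\<in>net d. \<tau> < \<bar>quadform d (Mhat N X) w - quadform d Mpop w\<bar>}"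
  have "1 \<le> c"
    using finite_net zero_in_net by (auto simp: c_def Suc_le_eq card_gt_0_iff)
  then have "0 \<le> \<Lambda>"
    using \<delta> by (simp add: \<Lambda>_def field_simps)
  have "0 \<le> \<tau>"
    using \<open>0 \<le> \<Lambda>\<close> by (simp add: \<tau>_def)
  have "measure_pmf.prob P Bad \<le> c * (2 * exp (- real N * min (\<tau>\<^sup>2 / 9600) (\<tau> / 16)))"
    unfolding P_def Bad_def c_def by (rule prob_net_deviation_le[OF d N \<open>0 \<le> \<tau>\<close>])
  also have "\<dots> \<le> c * (2 * exp (- \<Lambda>))"
    using bernstein_rate_ge_of_threshold[of "real N" 2400 \<Lambda>] N \<open>0 \<le> \<Lambda>\<close> \<open>1 \<le> c\<close>
    by (simp add: \<tau>_def)
  also have "\<dots> = \<delta>"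
    using \<open>1 \<le> c\<close> \<delta> by (simp add: \<Lambda>_def exp_minus)
  finally have "measure_pmf.prob P Bad \<le> \<delta>" .
  moreover have "opnorm d (Mhat N X) \<le> Bnd 1000 N d \<delta>" if "X \<notin> Bad" for X
  proof -
    have "opnorm d (Mhat N X) \<le> 1 + 2 * \<tau>"
      using that by (intro opnorm_Mhat_le_of_net d) (auto simp: Bad_def not_less)
    also have "\<dots> \<le> Bnd 1000 N d \<delta>"
      unfolding \<tau>_def using ln_card_net_le[OF d \<delta>] N \<open>0 \<le> \<Lambda>\<close>
      by (intro one_plus_twice_threshold_le_Bnd) (auto simp: \<Lambda>_def c_def)
    finally show ?thesis .
  qed
  then have "measure_pmf.prob P (UNIV - Bad)
      \<le> measure_pmf.prob P {X. opnorm d (Mhat N X) \<le> Bnd 1000 N d \<delta>}"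
    by (intro measure_pmf.finite_measure_mono) auto
  ultimately show ?thesis
    using measure_pmf.prob_compl[of Bad P] by (simp add: P_def)
qed

lemma stable_event_if_opnorm_le:
  assumes \<alpha>: "0 < \<alpha>" and B: "0 < B" and M: "opnorm d (Mhat N X) \<le> B"
    and astar: "astar \<le> 1 / (2 * \<alpha> * B)"
  shows "stable_event N d \<alpha> a0 w0 astar X"
  unfolding stable_event_def
proof (intro allI impI)
  fix t
  define a where "a = \<bar>fst (traj d \<alpha> (Mhat N X) a0 w0 t)\<bar>"
  assume "\<forall>s\<le>t. \<bar>fst (traj d \<alpha> (Mhat N X) a0 w0 s)\<bar> < astar"
  then have "a \<le> astar"
    by (auto simp: a_def)
  have "\<alpha> * a * opnorm d (Mhat N X) \<le> \<alpha> * a * B"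
    using M \<alpha> by (intro mult_left_mono) (auto simp: a_def)
  also have "\<dots> \<le> \<alpha> * astar * B"
    using \<open>a \<le> astar\<close> \<alpha> B by (intro mult_right_mono mult_left_mono) auto
  also have "\<dots> \<le> \<alpha> * (1 / (2 * \<alpha> * B)) * B"
    using astar \<alpha> B by (intro mult_right_mono mult_left_mono) auto
  also have "\<dots> = 1 / 2"
    using \<alpha> B by simp
  finally show "\<alpha> * \<bar>fst (traj d \<alpha> (Mhat N X) a0 w0 t)\<bar> * opnorm d (Mhat N X) \<le> 1 / 2"
    by (simp add: a_def)
qed

lemma one_le_Bnd:
  assumes "2 \<le> d" "0 < \<delta>" "\<delta> < 1" "0 \<le> C"
  shows "1 \<le> Bnd C N d \<delta>"
proof -
  have "0 \<le> ln (2 * real d / \<delta>)"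
    using assms by (simp add: field_simps)
  then show ?thesis
    using assms by (simp add: Bnd_def)
qed

theorem corollary9:
  shows "\<exists>C>0. \<forall>(d::nat) (N::nat) (\<delta>::real) (\<alpha>::real) (w0::nat \<Rightarrow> real) (a0::real) (astar::real).
     2 \<le> d \<and> 1 \<le> N \<and> 0 < \<delta> \<and> \<delta> < 1 \<and> 0 < \<alpha> \<and> vnorm d w0 = 1 \<and>
     astar \<le> min 1 (1 / (2 * \<alpha> * Bnd C N d \<delta>)) \<longrightarrow>
     measure_pmf.prob (pmf_of_set (samples N d)) {X. stable_event N d \<alpha> a0 w0 astar X} \<ge> 1 - \<delta>"
proof (intro exI[of _ 1000] conjI allI impI)
  fix d N :: nat and \<delta> \<alpha> a0 astar :: real and w0 :: "nat \<Rightarrow> real"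
  assume "2 \<le> d \<and> 1 \<le> N \<and> 0 < \<delta> \<and> \<delta> < 1 \<and> 0 < \<alpha> \<and> vnorm d w0 = 1 \<and>
     astar \<le> min 1 (1 / (2 * \<alpha> * Bnd 1000 N d \<delta>))"
  then have d: "2 \<le> d" and N: "1 \<le> N" and \<delta>: "0 < \<delta>" "\<delta> < 1" and \<alpha>: "0 < \<alpha>"
    and astar: "astar \<le> 1 / (2 * \<alpha> * Bnd 1000 N d \<delta>)"
    by auto
  have "0 < Bnd 1000 N d \<delta>"
    using one_le_Bnd[OF d \<delta>, of 1000 N] by simp
  then have "{X. opnorm d (Mhat N X) \<le> Bnd 1000 N d \<delta>} \<subseteq> {X. stable_event N d \<alpha> a0 w0 astar X}"
    using stable_event_if_opnorm_le[OF \<alpha> _ _ astar] by blast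
  then have "measure_pmf.prob (pmf_of_set (samples N d)) {X. opnorm d (Mhat N X) \<le> Bnd 1000 N d \<delta>}
      \<le> measure_pmf.prob (pmf_of_set (samples N d)) {X. stable_event N d \<alpha> a0 w0 astar X}"
    by (rule measure_pmf.finite_measure_mono) simp
  then show "1 - \<delta> \<le> measure_pmf.prob (pmf_of_set (samples N d)) {X. stable_event N d \<alpha> a0 w0 astar X}"
    using prob_opnorm_Mhat_le_Bnd[OF d N \<delta>] by linarith
qed simp

end
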